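(* Let $\pi$ be an $X_q(A_1)$-module algebra structure on $\mathbb C_q[x,y,z]$ of non-diagonal type, with $K_i(x)=\alpha_ix$, $K_i(y)=\beta_iy+t_ixz$, $K_i(z)=\gamma_iz$ ($i=1,2$). Let $a_0=(E(x))_0$, $c_0=(E(z))_0$, $a_0'=(F(x))_0$, $c_0'=(F(z))_0$. Then: 1. If $a_0\neq0$, then $\alpha_1=q$, $\alpha_2=-q$, $\beta_1^{-1}\beta_2=q$, $\gamma_1^{-1}\gamma_2=q$, $(E(x))_1=0$ and $(E(y))_1=-\frac{a_0(t_2+qt_1)}{2q\beta_1}z$. 2. If $c_0\neq0$, then $\gamma_1=q$, $\gamma_2=-q$, $\beta_1^{-1}\beta_2=q^{-1}$, $\alpha_1^{-1}\alpha_2=q^{-1}$, $(E(z))_1=0$ and $(E(y))_1=-\frac{c_0(t_1+qt_2)}{2q\beta_1}x$. 3. If $a_0'\neq0$, then $\alpha_1=q^{-1}$, $\alpha_2=-q^{-1}$, $\beta_1\beta_2^{-1}=q^{-1}$, $\gamma_1\gamma_2^{-1}=q^{-1}$, $(F(x))_1=0$ and $(F(y))_1=\frac{a_0'(t_2-qt_1)}{2q\alpha_2\gamma_2}z$. 4. If $c_0'\neq0$, then $\gamma_1=q^{-1}$, $\gamma_2=-q^{-1}$, $\beta_1\beta_2^{-1}=q$, $\alpha_1\alpha_2^{-1}=q$, $(F(z))_1=0$ and $(F(y))_1=\frac{c_0'(qt_2-t_1)}{2q\alpha_2\gamma_2}x$.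
   Context: Fix $q\in\mathbb C^*$ not a root of unity, i.e. $q^n\neq1$ for all nonzero integers $n$. $X_q(A_1)$ is the unital associative $\mathbb C$-algebra generated by $E,F,K_1^{\pm1},K_2^{\pm1}$ with relations: - $K_iK_i^{-1}=K_i^{-1}K_i=1$ and $K_1K_2=K_2K_1$; - $K_1E=q^{-1}EK_1$, $K_1F=qFK_1$, $K_2E=-q^{-1}EK_2$, $K_2F=-qFK_2$; - $EF-FE=\frac{K_2K_1^{-1}-K_2^{-1}K_1}{q-q^{-1}}$; - $E^2=F^2=0$. It is a Hopf algebra with $\Delta(K_i)=K_i\otimes K_i$, $\Delta(E)=E\otimes1+K_2K_1^{-1}\otimes E$, $\Delta(F)=1\otimes F+F\otimes K_2^{-1}K_1$, $\varepsilon(K_i)=1$ and $\varepsilon(E)=\varepsilon(F)=0$. $\mathbb C_q[x,y,z]$ is the unital $\mathbb C$-algebra generated by $x,y,z$ with $yx=qxy$, $zy=qyz$, $zx=qxz$. It is graded by total degree in $x,y,z$. For $p\in\mathbb C_q[x,y,z]$, $(p)_s$ denotes the homogeneous component of $p$ of degree $s$. An $X_q(A_1)$-module algebra structure on $A=\mathbb C_q[x,y,z]$ is an algebra homomorphism $\pi:X_q(A_1)\to\mathrm{End}_{\mathbb C}(A)$ such that $\pi(h)(ab)=\sum\pi(h_{(1)})(a)\pi(h_{(2)})(b)$ and $\pi(h)(1)=\varepsilon(h)1$, where $\Delta(h)=\sum h_{(1)}\otimes h_{(2)}$. One writes $h(a)$ for $\pi(h)(a)$. Concretely, $K_1,K_2$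 act by algebra automorphisms, $E(ab)=E(a)b+K_2K_1^{-1}(a)E(b)$ and $F(ab)=aF(b)+F(a)K_2^{-1}K_1(b)$. The structure is of non-diagonal type if there are $\alpha_i,\beta_i,\gamma_i,t_i\in\mathbb C^*$ ($i=1,2$) with $K_i(x)=\alpha_ix$, $K_i(y)=\beta_iy+t_ixz$, $K_i(z)=\gamma_iz$. *)

theory Defs
  imports Complex_Main
begin

text \<open>Elements of the quantum polynomial algebra C_q[x,y,z] are represented in the
PBW basis x^i y^j z^k: a function p with p i j k the coefficient of x^i y^j z^k,
having finite support.\<close>

type_synonym qpol = "nat \<Rightarrow> nat \<Rightarrow> nat \<Rightarrow> complex"

definition QP :: "qpol set" where
  "QP = {p. finite {(i, j, k). p i j k \<noteq> 0}}"

definition qmono :: "nat \<Rightarrow> nat \<Rightarrow> nat \<Rightarrow> qpol" where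
  "qmono i j k = (\<lambda>a b c. if a = i \<and> b = j \<and> c = k then 1 else 0)"

definition qone :: qpol where "qone = qmono 0 0 0"
definition qx :: qpol where "qx = qmono 1 0 0"
definition qy :: qpol where "qy = qmono 0 1 0"
definition qz :: qpol where "qz = qmono 0 0 1"
definition qzero :: qpol where "qzero = (\<lambda>a b c. 0)"

definition qadd :: "qpol \<Rightarrow> qpol \<Rightarrow> qpol" where
  "qadd p r = (\<lambda>i j k. p i j k + r i j k)"

definition qsmul :: "complex \<Rightarrow> qpol \<Rightarrow> qpol" where
  "qsmul c p = (\<lambda>i j k. c * p i j k)"

definition qsub :: "qpol \<Rightarrow> qpol \<Rightarrow> qpol" where
  "qsub p r = (\<lambda>i j k. p i j k - r i j k)"

text \<open>Multiplication: (x^a y^b z^c)(x^d y^e z^f) = q^(bd+cd+ce) x^(a+d) y^(b+e) z^(c+f),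
from yx = q xy, zy = q yz, zx = q xz.\<close>
definition qmul :: "complex \<Rightarrow> qpol \<Rightarrow> qpol \<Rightarrow> qpol" where
  "qmul q p r = (\<lambda>i j k. \<Sum>a\<le>i. \<Sum>b\<le>j. \<Sum>c\<le>k.
      q ^ (b * (i - a) + c * (i - a) + c * (j - b)) * p a b c * r (i - a) (j - b) (k - c))"

definition hcomp :: "nat \<Rightarrow> qpol \<Rightarrow> qpol" where
  "hcomp s p = (\<lambda>i j k. if i + j + k = s then p i j k else 0)"

definition not_root_of_unity :: "complex \<Rightarrow> bool" where
  "not_root_of_unity q \<longleftrightarrow> q \<noteq> 0 \<and> (\<forall>n::int. n \<noteq> 0 \<longrightarrow> q powi n \<noteq> 1)"

definition qlin :: "(qpol \<Rightarrow> qpol) \<Rightarrow> bool" where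
  "qlin f \<longleftrightarrow> f ` QP \<subseteq> QP \<and>
     (\<forall>p\<in>QP. \<forall>r\<in>QP. f (qadd p r) = qadd (f p) (f r)) \<and>
     (\<forall>c. \<forall>p\<in>QP. f (qsmul c p) = qsmul c (f p))"

text \<open>An X_q(A_1)-module algebra structure on C_q[x,y,z], given by the images
E, F, K1, K1i (= K1^{-1}), K2, K2i (= K2^{-1}) of the generators: they are linear,
satisfy the defining relations of X_q(A_1) (so that they define an algebra
homomorphism X_q(A_1) -> End(A)) and the module-algebra compatibility conditions
for the generators (w.r.t. the coproduct and counit).\<close>
definition Xq_modalg ::
  "complex \<Rightarrow> (qpol \<Rightarrow> qpol) \<Rightarrow> (qpol \<Rightarrow> qpol) \<Rightarrow> (qpol \<Rightarrow> qpol) \<Rightarrow> (qpol \<Rightarrow> qpol)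
     \<Rightarrow> (qpol \<Rightarrow> qpol) \<Rightarrow> (qpol \<Rightarrow> qpol) \<Rightarrow> bool" where
  "Xq_modalg q E F K1 K1i K2 K2i \<longleftrightarrow>
     qlin E \<and> qlin F \<and> qlin K1 \<and> qlin K1i \<and> qlin K2 \<and> qlin K2i \<and>
     (\<forall>p\<in>QP.
        K1 (K1i p) = p \<and> K1i (K1 p) = p \<and> K2 (K2i p) = p \<and> K2i (K2 p) = p \<and>
        K1 (K2 p) = K2 (K1 p) \<and>
        K1 (E p) = qsmul (inverse q) (E (K1 p)) \<and>
        K1 (F p) = qsmul q (F (K1 p)) \<and>
        K2 (E p) = qsmul (- inverse q) (E (K2 p)) \<and>
        K2 (F p) = qsmul (- q) (F (K2 p)) \<and>
        qsub (E (F p)) (F (E p)) =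
          qsmul (1 / (q - inverse q)) (qsub (K2 (K1i p)) (K2i (K1 p))) \<and>
        E (E p) = qzero \<and> F (F p) = qzero) \<and>
     (\<forall>a\<in>QP. \<forall>b\<in>QP.
        K1 (qmul q a b) = qmul q (K1 a) (K1 b) \<and>
        K1i (qmul q a b) = qmul q (K1i a) (K1i b) \<and>
        K2 (qmul q a b) = qmul q (K2 a) (K2 b) \<and>
        K2i (qmul q a b) = qmul q (K2i a) (K2i b) \<and>
        E (qmul q a b) = qadd (qmul q (E a) b) (qmul q (K2 (K1i a)) (E b)) \<and>
        F (qmul q a b) = qadd (qmul q a (F b)) (qmul q (F a) (K2i (K1 b)))) \<and>
     K1 qone = qone \<and> K1i qone = qone \<and> K2 qone = qone \<and> K2i qone = qone \<and>
     E qone = qzero \<and> F qone = qzero"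

end

theory Submission
  imports Defs
begin

text \<open>The automorphisms \<open>K\<^sub>i\<close> are triangular for the degree filtration, so they fix constant
  terms and act diagonally on linear terms. By the commutation relations between \<open>K\<^sub>i\<close> and \<open>E\<close>,
  \<open>E x\<close> is a common eigenvector of \<open>K\<^sub>1, K\<^sub>2\<close> with eigenvalues \<open>q\<^sup>-\<^sup>1\<alpha>\<^sub>1\<close>, \<open>-q\<^sup>-\<^sup>1\<alpha>\<^sub>2\<close>; a nonzero
  constant term forces both eigenvalues to be \<open>1\<close>, and kills each linear coefficient of \<open>E x\<close>
  whose weights are not both \<open>1\<close>. Applying the twisted Leibniz rule of \<open>E\<close> to \<open>yx = qxy\<close> and
  \<open>zx = qxz\<close> and comparing coefficients of degree \<open>\<le> 2\<close> yields the ratios \<open>\<beta>\<^sub>2/\<beta>\<^sub>1\<close>,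
  \<open>\<gamma>\<^sub>2/\<gamma>\<^sub>1\<close> and the linear part of \<open>E y\<close>. The other three cases are identical, with \<open>z\<close> for \<open>x\<close>
  (using \<open>zy = qyz\<close>) and/or \<open>F\<close> for \<open>E\<close>.\<close>

subsection \<open>The polynomial algebra\<close>

lemma mem_QP_iff: "p \<in> QP \<longleftrightarrow> finite {(i, j, k). p i j k \<noteq> 0}"
  by (simp add: QP_def)

lemma qmono_QP [simp]: "qmono i j k \<in> QP"
proof -
  have "{(a, b, c). qmono i j k a b c \<noteq> 0} = {(i, j, k)}"
    by (auto simp: qmono_def)
  then show ?thesis
    by (simp add: mem_QP_iff)
qed

lemma generators_QP [simp]: "qone \<in> QP" "qx \<in> QP" "qy \<in> QP" "qz \<in> QP"
  by (simp_all add: qone_def qx_def qy_def qz_def)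

lemma qadd_QP [simp]: "p \<in> QP \<Longrightarrow> r \<in> QP \<Longrightarrow> qadd p r \<in> QP"
  unfolding mem_QP_iff
  by (rule finite_subset[of _ "{(i, j, k). p i j k \<noteq> 0} \<union> {(i, j, k). r i j k \<noteq> 0}"])
    (auto simp: qadd_def)

lemma qsmul_QP [simp]: "p \<in> QP \<Longrightarrow> qsmul c p \<in> QP"
  unfolding mem_QP_iff
  by (rule finite_subset[of _ "{(i, j, k). p i j k \<noteq> 0}"]) (auto simp: qsmul_def)

lemma qmul_QP [simp]:
  assumes "p \<in> QP" "r \<in> QP"
  shows "qmul q p r \<in> QP"
proof -
  define Sp where "Sp = {(i, j, k). p i j k \<noteq> 0}"
  define Sr where "Sr = {(i, j, k). r i j k \<noteq> 0}"
  let ?plus = "\<lambda>((a::nat, b::nat, c::nat), (d, e, f)). (a + d, b + e, c + f)"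
  have "{(i, j, k). qmul q p r i j k \<noteq> 0} \<subseteq> ?plus ` (Sp \<times> Sr)"
  proof clarify
    fix i j k assume "qmul q p r i j k \<noteq> 0"
    then obtain a b c where abc: "a \<le> i" "b \<le> j" "c \<le> k"
      and "q ^ (b * (i - a) + c * (i - a) + c * (j - b)) * p a b c * r (i - a) (j - b) (k - c) \<noteq> 0"
      unfolding qmul_def by (meson atMost_iff sum.neutral)
    then have "((a, b, c), (i - a, j - b, k - c)) \<in> Sp \<times> Sr"
      by (simp add: Sp_def Sr_def)
    moreover have "(i, j, k) = ?plus ((a, b, c), (i - a, j - b, k - c))"
      using abc by simp
    ultimately show "(i, j, k) \<in> ?plus ` (Sp \<times> Sr)"
      by blast
  qed
  moreover have "finite Sp" "finite Sr"
    using assms by (simp_all add: mem_QP_iff Sp_def Sr_def)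
  ultimately show ?thesis
    unfolding mem_QP_iff by (meson finite_SigmaI finite_imageI finite_subset)
qed

lemma sum_atMost_delta3:
  "(\<Sum>a\<le>(i::nat). \<Sum>b\<le>(j::nat). \<Sum>c\<le>(k::nat). if a = A \<and> b = B \<and> c = C \<and> P then g a b c else (0::'a::comm_monoid_add))
   = (if A \<le> i \<and> B \<le> j \<and> C \<le> k \<and> P then g A B C else 0)"
proof -
  have inner: "(\<Sum>c\<le>k. if a = A \<and> b = B \<and> c = C \<and> P then g a b c else 0) =
      (if a = A \<and> b = B \<and> C \<le> k \<and> P then g a b C else 0)" for a b
    by (cases "a = A \<and> b = B \<and> P") auto
  have middle: "(\<Sum>b\<le>j. if a = A \<and> b = B \<and> C \<le> k \<and> P then g a b C else 0) =
      (if a = A \<and> B \<le> j \<and> C \<le> k \<and> P then g a B C else 0)" for a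
    by (cases "a = A \<and> C \<le> k \<and> P") auto
  show ?thesis
    unfolding inner middle by (cases "B \<le> j \<and> C \<le> k \<and> P") auto
qed

lemma qmul_qmono_left:
  "qmul q (qmono d e f) r i j k =
     (if d \<le> i \<and> e \<le> j \<and> f \<le> k
      then q ^ (e * (i - d) + f * (i - d) + f * (j - e)) * r (i - d) (j - e) (k - f) else 0)"
proof -
  have "qmul q (qmono d e f) r i j k = (\<Sum>a\<le>i. \<Sum>b\<le>j. \<Sum>c\<le>k.
      if a = d \<and> b = e \<and> c = f \<and> True
      then q ^ (b * (i - a) + c * (i - a) + c * (j - b)) * r (i - a) (j - b) (k - c) else 0)"
    unfolding qmul_def qmono_def by (intro sum.cong refl) auto
  then show ?thesis
    by (simp only: sum_atMost_delta3) simp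
qed

lemma qmul_qmono_right:
  "qmul q p (qmono d e f) i j k =
     (if d \<le> i \<and> e \<le> j \<and> f \<le> k
      then q ^ ((j - e) * d + (k - f) * d + (k - f) * e) * p (i - d) (j - e) (k - f) else 0)"
proof -
  have "qmul q p (qmono d e f) i j k = (\<Sum>a\<le>i. \<Sum>b\<le>j. \<Sum>c\<le>k.
      if a = i - d \<and> b = j - e \<and> c = k - f \<and> (d \<le> i \<and> e \<le> j \<and> f \<le> k)
      then q ^ (b * (i - a) + c * (i - a) + c * (j - b)) * p a b c else 0)"
    unfolding qmul_def qmono_def by (intro sum.cong refl) auto
  then show ?thesis
    by (simp only: sum_atMost_delta3) simp
qed

lemma qmul_qadd_left: "qmul q (qadd a b) r = qadd (qmul q a r) (qmul q b r)"
  unfolding qmul_def qadd_def by (simp add: algebra_simps sum.distrib)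

lemma qmul_qadd_right: "qmul q r (qadd a b) = qadd (qmul q r a) (qmul q r b)"
  unfolding qmul_def qadd_def by (simp add: algebra_simps sum.distrib)

lemma qmul_qsmul_left: "qmul q (qsmul c a) r = qsmul c (qmul q a r)"
  unfolding qmul_def qsmul_def by (simp add: algebra_simps sum_distrib_left)

lemma qmul_qsmul_right: "qmul q r (qsmul c a) = qsmul c (qmul q r a)"
  unfolding qmul_def qsmul_def by (simp add: algebra_simps sum_distrib_left)

lemmas qmul_bilinear = qmul_qadd_left qmul_qadd_right qmul_qsmul_left qmul_qsmul_right

lemma qsmul_qsmul: "qsmul a (qsmul b p) = qsmul (a * b) p"
  by (simp add: qsmul_def mult.assoc)

lemma qsmul_1: "qsmul 1 p = p"
  by (simp add: qsmul_def)

lemma qmono_apply: "qmono a b c i j k = (if i = a \<and> j = b \<and> k = c then 1 else 0)"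
  by (simp add: qmono_def)

lemma qmul_qx_qz: "qmul q qx qz = qmono 1 0 1"
  unfolding qx_def qz_def by (intro ext) (simp add: qmul_qmono_left qmono_apply)

lemma qmul_qy_qx: "qmul q qy qx = qsmul q (qmul q qx qy)"
  unfolding qx_def qy_def by (intro ext) (simp add: qmul_qmono_left qsmul_def qmono_apply)

lemma qmul_qz_qx: "qmul q qz qx = qsmul q (qmul q qx qz)"
  unfolding qx_def qz_def by (intro ext) (simp add: qmul_qmono_left qsmul_def qmono_apply)

lemma qmul_qz_qy: "qmul q qz qy = qsmul q (qmul q qy qz)"
  unfolding qy_def qz_def by (intro ext) (simp add: qmul_qmono_left qsmul_def qmono_apply)

lemma hcomp_1_eq:
  "hcomp 1 p = qadd (qsmul (p 1 0 0) qx) (qadd (qsmul (p 0 1 0) qy) (qsmul (p 0 0 1) qz))"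
proof (intro ext)
  fix i j k :: nat
  have "i + j + k = 1 \<longleftrightarrow> (i, j, k) \<in> {(1, 0, 0), (0, 1, 0), (0, 0, 1)}"
    by auto
  then show "hcomp 1 p i j k =
      qadd (qsmul (p 1 0 0) qx) (qadd (qsmul (p 0 1 0) qy) (qsmul (p 0 0 1) qz)) i j k"
    by (auto simp: hcomp_def qadd_def qsmul_def qx_def qy_def qz_def qmono_apply)
qed

lemma hcomp_1_eq_qzero: "p 1 0 0 = 0 \<Longrightarrow> p 0 1 0 = 0 \<Longrightarrow> p 0 0 1 = 0 \<Longrightarrow> hcomp 1 p = qzero"
  unfolding hcomp_1_eq by (intro ext) (simp add: qadd_def qsmul_def qzero_def)

lemma hcomp_1_eq_qx: "p 0 1 0 = 0 \<Longrightarrow> p 0 0 1 = 0 \<Longrightarrow> hcomp 1 p = qsmul (p 1 0 0) qx"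
  unfolding hcomp_1_eq by (intro ext) (simp add: qadd_def qsmul_def)

lemma hcomp_1_eq_qz: "p 1 0 0 = 0 \<Longrightarrow> p 0 1 0 = 0 \<Longrightarrow> hcomp 1 p = qsmul (p 0 0 1) qz"
  unfolding hcomp_1_eq by (intro ext) (simp add: qadd_def qsmul_def)

subsection \<open>Endomorphisms and the degree filtration\<close>

definition qorder_ge :: "nat \<Rightarrow> qpol \<Rightarrow> bool" where
  "qorder_ge d p \<longleftrightarrow> (\<forall>i j k. i + j + k < d \<longrightarrow> p i j k = 0)"

lemma qorder_ge_0 [simp]: "qorder_ge 0 p"
  by (simp add: qorder_ge_def)

lemma qorder_ge_qadd: "qorder_ge d p \<Longrightarrow> qorder_ge d r \<Longrightarrow> qorder_ge d (qadd p r)"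
  by (simp add: qorder_ge_def qadd_def)

lemma qorder_ge_qmul:
  assumes "qorder_ge d p" "qorder_ge e r"
  shows "qorder_ge (d + e) (qmul q p r)"
  unfolding qorder_ge_def
proof (intro allI impI)
  fix i j k assume ijk: "i + j + k < d + e"
  show "qmul q p r i j k = 0"
    unfolding qmul_def
  proof (intro sum.neutral ballI)
    fix a b c assume "a \<in> {..i}" "b \<in> {..j}" "c \<in> {..k}"
    then have "a + b + c < d \<or> (i - a) + (j - b) + (k - c) < e"
      using ijk by auto
    then show "q ^ (b * (i - a) + c * (i - a) + c * (j - b)) * p a b c * r (i - a) (j - b) (k - c) = 0"
      using assms unfolding qorder_ge_def by auto
  qed
qed

definition qquot_x :: "qpol \<Rightarrow> qpol" where
  "qquot_x p = (\<lambda>i j k. p (Suc i) j k)"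

definition qquot_y :: "qpol \<Rightarrow> qpol" where
  "qquot_y p = (\<lambda>i j k. if i = 0 then p 0 (Suc j) k else 0)"

definition qquot_z :: "qpol \<Rightarrow> qpol" where
  "qquot_z p = (\<lambda>i j k. if i = 0 \<and> j = 0 then p 0 0 (Suc k) else 0)"

lemma qpol_division:
  "p = qadd (qsmul (p 0 0 0) qone)
     (qadd (qmul q qx (qquot_x p)) (qadd (qmul q qy (qquot_y p)) (qmul q qz (qquot_z p))))"
proof (intro ext)
  fix i j k
  show "p i j k = qadd (qsmul (p 0 0 0) qone)
     (qadd (qmul q qx (qquot_x p)) (qadd (qmul q qy (qquot_y p)) (qmul q qz (qquot_z p)))) i j k"
    unfolding qx_def qy_def qz_def qadd_def qsmul_def qmul_qmono_left
    by (cases i; cases j; cases k) (auto simp: qone_def qmono_def qquot_x_def qquot_y_def qquot_z_def)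
qed

lemma qquot_QP:
  assumes "p \<in> QP"
  shows "qquot_x p \<in> QP" "qquot_y p \<in> QP" "qquot_z p \<in> QP"
proof -
  let ?S = "{(i, j, k). p i j k \<noteq> 0}"
  have fin: "finite ?S"
    using assms by (simp add: mem_QP_iff)
  have "{(i, j, k). qquot_x p i j k \<noteq> 0} \<subseteq> (\<lambda>(i, j, k). (i - 1, j, k)) ` ?S"
    by (force simp: qquot_x_def)
  then show "qquot_x p \<in> QP"
    using fin unfolding mem_QP_iff by (meson finite_imageI finite_subset)
  have "{(i, j, k). qquot_y p i j k \<noteq> 0} \<subseteq> (\<lambda>(i, j, k). (i, j - 1, k)) ` ?S"
    by (force simp: qquot_y_def split: if_splits)
  then show "qquot_y p \<in> QP"
    using fin unfolding mem_QP_iff by (meson finite_imageI finite_subset)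
  have "{(i, j, k). qquot_z p i j k \<noteq> 0} \<subseteq> (\<lambda>(i, j, k). (i, j, k - 1)) ` ?S"
    by (force simp: qquot_z_def split: if_splits)
  then show "qquot_z p \<in> QP"
    using fin unfolding mem_QP_iff by (meson finite_imageI finite_subset)
qed

lemma qorder_ge_qquot:
  assumes "qorder_ge (Suc d) p"
  shows "qorder_ge d (qquot_x p)" "qorder_ge d (qquot_y p)" "qorder_ge d (qquot_z p)"
  using assms by (auto simp: qorder_ge_def qquot_x_def qquot_y_def qquot_z_def)

definition qmultiplicative :: "complex \<Rightarrow> (qpol \<Rightarrow> qpol) \<Rightarrow> bool" where
  "qmultiplicative q K \<longleftrightarrow> (\<forall>a\<in>QP. \<forall>b\<in>QP. K (qmul q a b) = qmul q (K a) (K b))"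

lemma qlin_qadd: "qlin K \<Longrightarrow> p \<in> QP \<Longrightarrow> r \<in> QP \<Longrightarrow> K (qadd p r) = qadd (K p) (K r)"
  by (simp add: qlin_def)

lemma qlin_qsmul: "qlin K \<Longrightarrow> p \<in> QP \<Longrightarrow> K (qsmul c p) = qsmul c (K p)"
  by (simp add: qlin_def)

lemma qlin_QP: "qlin K \<Longrightarrow> p \<in> QP \<Longrightarrow> K p \<in> QP"
  by (auto simp: qlin_def)

lemma endomorphism_preserves_order:
  assumes lin: "qlin K" and mult: "qmultiplicative q K"
    and gens: "qorder_ge 1 (K qx)" "qorder_ge 1 (K qy)" "qorder_ge 1 (K qz)"
  shows "p \<in> QP \<Longrightarrow> qorder_ge d p \<Longrightarrow> qorder_ge d (K p)"
proof (induction d arbitrary: p)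
  case 0
  then show ?case by simp
next
  case (Suc d)
  note quot = qquot_QP[OF Suc.prems(1)]
  have "p 0 0 0 = 0"
    using Suc.prems(2) by (simp add: qorder_ge_def)
  then have Kp: "K p = qadd (qsmul 0 (K qone)) (qadd (qmul q (K qx) (K (qquot_x p)))
      (qadd (qmul q (K qy) (K (qquot_y p))) (qmul q (K qz) (K (qquot_z p)))))"
    using qpol_division[of p q] quot mult
    by (metis (no_types) generators_QP qlin_qadd[OF lin] qlin_qsmul[OF lin] qmul_QP qsmul_QP
        qadd_QP qmultiplicative_def)
  have "qorder_ge d (K (qquot_x p))" "qorder_ge d (K (qquot_y p))" "qorder_ge d (K (qquot_z p))"
    using Suc.IH quot qorder_ge_qquot[OF Suc.prems(2)] by auto
  then have "qorder_ge (1 + d) (qmul q (K qx) (K (qquot_x p)))"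
      "qorder_ge (1 + d) (qmul q (K qy) (K (qquot_y p)))"
      "qorder_ge (1 + d) (qmul q (K qz) (K (qquot_z p)))"
    using gens by (blast intro: qorder_ge_qmul)+
  moreover have "qorder_ge (Suc d) (qsmul 0 (K qone))"
    by (simp add: qorder_ge_def qsmul_def)
  ultimately show ?case
    unfolding Kp     by (simp add: qorder_ge_qadd)
qed

definition qtail :: "qpol \<Rightarrow> qpol" where
  "qtail p = (\<lambda>i j k. if i + j + k \<le> 1 then 0 else p i j k)"

lemma qtail_QP: "p \<in> QP \<Longrightarrow> qtail p \<in> QP"
  unfolding mem_QP_iff
  by (rule finite_subset[of _ "{(i, j, k). p i j k \<noteq> 0}"]) (auto simp: qtail_def)

lemma qorder_ge_qtail: "qorder_ge 2 (qtail p)"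
  by (simp add: qorder_ge_def qtail_def)

lemma qpol_eq_linear_plus_qtail:
  "p = qadd (qadd (qsmul (p 0 0 0) qone)
     (qadd (qsmul (p 1 0 0) qx) (qadd (qsmul (p 0 1 0) qy) (qsmul (p 0 0 1) qz)))) (qtail p)"
proof (intro ext)
  fix i j k
  show "p i j k = qadd (qadd (qsmul (p 0 0 0) qone)
     (qadd (qsmul (p 1 0 0) qx) (qadd (qsmul (p 0 1 0) qy) (qsmul (p 0 0 1) qz)))) (qtail p) i j k"
    unfolding qx_def qy_def qz_def qadd_def qsmul_def qtail_def qone_def qmono_def
    by (cases i; cases j; cases k) auto
qed

text \<open>Since \<open>K\<close> preserves the order filtration, the part of \<open>p\<close> of degree \<open>\<ge> 2\<close> does not
  contribute to the constant and linear terms of \<open>K p\<close>; nor does \<open>t xz\<close>.\<close>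

lemma endomorphism_low_coeffs:
  assumes lin: "qlin K" and mult: "qmultiplicative q K" and one: "K qone = qone"
    and Kx: "K qx = qsmul \<alpha> qx" and Ky: "K qy = qadd (qsmul \<beta> qy) (qsmul t (qmul q qx qz))"
    and Kz: "K qz = qsmul \<gamma> qz" and p: "p \<in> QP"
  shows "K p 0 0 0 = p 0 0 0" "K p 1 0 0 = \<alpha> * p 1 0 0" "K p 0 1 0 = \<beta> * p 0 1 0"
    "K p 0 0 1 = \<gamma> * p 0 0 1"
proof -
  have "qorder_ge 1 (K qx)" "qorder_ge 1 (K qy)" "qorder_ge 1 (K qz)"
    unfolding Kx Ky Kz qmul_qx_qz
    by (auto simp: qorder_ge_def qsmul_def qadd_def qx_def qy_def qz_def qmono_def)
  then have "qorder_ge 2 (K (qtail p))"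
    using endomorphism_preserves_order[OF lin mult] qtail_QP[OF p] qorder_ge_qtail by blast
  then have tail: "K (qtail p) 0 0 0 = 0" "K (qtail p) 1 0 0 = 0" "K (qtail p) 0 1 0 = 0"
      "K (qtail p) 0 0 1 = 0"
    unfolding qorder_ge_def by auto
  have "K p = K (qadd (qadd (qsmul (p 0 0 0) qone) (qadd (qsmul (p 1 0 0) qx)
      (qadd (qsmul (p 0 1 0) qy) (qsmul (p 0 0 1) qz)))) (qtail p))"
    by (rule arg_cong[OF qpol_eq_linear_plus_qtail])
  also have "\<dots> = qadd (qadd (qsmul (p 0 0 0) qone) (qadd (qsmul (p 1 0 0) (K qx))
      (qadd (qsmul (p 0 1 0) (K qy)) (qsmul (p 0 0 1) (K qz))))) (K (qtail p))"
    by (simp add: qtail_QP[OF p] one qlin_qadd[OF lin] qlin_qsmul[OF lin])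
  finally show "K p 0 0 0 = p 0 0 0" "K p 1 0 0 = \<alpha> * p 1 0 0" "K p 0 1 0 = \<beta> * p 0 1 0"
    "K p 0 0 1 = \<gamma> * p 0 0 1"
    using tail unfolding Kx Ky Kz qmul_qx_qz
    by (simp_all add: qadd_def qsmul_def qone_def qx_def qy_def qz_def qmono_def)
qed

subsection \<open>Module algebra structures of non-diagonal type\<close>

locale nondiagonal_module_algebra =
  fixes q \<alpha>1 \<alpha>2 \<beta>1 \<beta>2 \<gamma>1 \<gamma>2 t1 t2 :: complex
    and E F K1 K1i K2 K2i :: "qpol \<Rightarrow> qpol"
  assumes not_root: "not_root_of_unity q"
    and module_algebra: "Xq_modalg q E F K1 K1i K2 K2i"
    and nonzero: "\<alpha>1 \<noteq> 0" "\<alpha>2 \<noteq> 0" "\<beta>1 \<noteq> 0" "\<beta>2 \<noteq> 0" "\<gamma>1 \<noteq> 0" "\<gamma>2 \<noteq> 0"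
    and K1_gens: "K1 qx = qsmul \<alpha>1 qx" "K1 qy = qadd (qsmul \<beta>1 qy) (qsmul t1 (qmul q qx qz))"
      "K1 qz = qsmul \<gamma>1 qz"
    and K2_gens: "K2 qx = qsmul \<alpha>2 qx" "K2 qy = qadd (qsmul \<beta>2 qy) (qsmul t2 (qmul q qx qz))"
      "K2 qz = qsmul \<gamma>2 qz"
begin

lemma q_nonzero: "q \<noteq> 0" and q_ne_1: "q \<noteq> 1" and q_ne_minus_1: "q \<noteq> -1"
proof -
  have "q powi 1 \<noteq> 1" "q powi 2 \<noteq> 1" "q \<noteq> 0"
    using not_root unfolding not_root_of_unity_def by (metis one_neq_zero zero_neq_numeral)+
  then show "q \<noteq> 0" "q \<noteq> 1" "q \<noteq> -1"
    by (auto simp: power2_eq_square)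
qed

lemma linear: "qlin E" "qlin F" "qlin K1" "qlin K1i" "qlin K2" "qlin K2i"
  using module_algebra by (simp_all add: Xq_modalg_def)

lemma multiplicative: "qmultiplicative q K1" "qmultiplicative q K2"
  using module_algebra by (simp_all add: Xq_modalg_def qmultiplicative_def)

lemma K_qone: "K1 qone = qone" "K2 qone = qone"
  using module_algebra by (simp_all add: Xq_modalg_def)

lemma K1i_eqI: "w \<in> QP \<Longrightarrow> K1 w = u \<Longrightarrow> K1i u = w"
  and K2i_eqI: "w \<in> QP \<Longrightarrow> K2 w = u \<Longrightarrow> K2i u = w"
  using module_algebra by (auto simp: Xq_modalg_def)

lemma E_qmul: "a \<in> QP \<Longrightarrow> b \<in> QP \<Longrightarrow> E (qmul q a b) = qadd (qmul q (E a) b) (qmul q (K2 (K1i a)) (E b))"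
  and F_qmul: "a \<in> QP \<Longrightarrow> b \<in> QP \<Longrightarrow> F (qmul q a b) = qadd (qmul q a (F b)) (qmul q (F a) (K2i (K1 b)))"
  using module_algebra by (simp_all add: Xq_modalg_def)

lemmas K1_low_coeffs = endomorphism_low_coeffs[OF linear(3) multiplicative(1) K_qone(1) K1_gens]
lemmas K2_low_coeffs = endomorphism_low_coeffs[OF linear(5) multiplicative(2) K_qone(2) K2_gens]

lemma weight_vector_with_constant_term:
  assumes p: "p \<in> QP" and K1p: "K1 p = qsmul c1 p" and K2p: "K2 p = qsmul c2 p"
    and const: "p 0 0 0 \<noteq> 0"
  shows "c1 = 1" "c2 = 1"
    and "(\<alpha>1, \<alpha>2) \<noteq> (1, 1) \<Longrightarrow> p 1 0 0 = 0"
    and "(\<beta>1, \<beta>2) \<noteq> (1, 1) \<Longrightarrow> p 0 1 0 = 0"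
    and "(\<gamma>1, \<gamma>2) \<noteq> (1, 1) \<Longrightarrow> p 0 0 1 = 0"
proof -
  have K1c: "c1 * p i j k = K1 p i j k" and K2c: "c2 * p i j k = K2 p i j k" for i j k
    by (simp_all add: K1p K2p qsmul_def)
  show c1: "c1 = 1" and c2: "c2 = 1"
    using K1c[of 0 0 0] K2c[of 0 0 0] K1_low_coeffs(1)[OF p] K2_low_coeffs(1)[OF p] const by simp_all
  show "(\<alpha>1, \<alpha>2) \<noteq> (1, 1) \<Longrightarrow> p 1 0 0 = 0"
    using K1c[of 1 0 0] K2c[of 1 0 0] K1_low_coeffs(2)[OF p] K2_low_coeffs(2)[OF p] c1 c2 by auto
  show "(\<beta>1, \<beta>2) \<noteq> (1, 1) \<Longrightarrow> p 0 1 0 = 0"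
    using K1c[of 0 1 0] K2c[of 0 1 0] K1_low_coeffs(3)[OF p] K2_low_coeffs(3)[OF p] c1 c2 by auto
  show "(\<gamma>1, \<gamma>2) \<noteq> (1, 1) \<Longrightarrow> p 0 0 1 = 0"
    using K1c[of 0 0 1] K2c[of 0 0 1] K1_low_coeffs(4)[OF p] K2_low_coeffs(4)[OF p] c1 c2 by auto
qed

lemma K_xz: "K1 (qmul q qx qz) = qsmul (\<alpha>1 * \<gamma>1) (qmul q qx qz)"
  "K2 (qmul q qx qz) = qsmul (\<alpha>2 * \<gamma>2) (qmul q qx qz)"
  using multiplicative K1_gens K2_gens
  by (simp_all add: qmultiplicative_def qmul_bilinear qsmul_qsmul mult.commute)

lemma K1i_gens:
  "K1i qx = qsmul (inverse \<alpha>1) qx"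
  "K1i qy = qadd (qsmul (inverse \<beta>1) qy) (qsmul (- t1 / (\<beta>1 * \<alpha>1 * \<gamma>1)) (qmul q qx qz))"
  "K1i qz = qsmul (inverse \<gamma>1) qz"
  using nonzero
  by (auto intro!: K1i_eqI simp: qlin_qsmul[OF linear(3)] qlin_qadd[OF linear(3)]
      K1_gens K_xz qsmul_qsmul qsmul_1, auto intro!: ext simp: qsmul_def qadd_def field_simps)

lemma K2i_gens:
  "K2i qx = qsmul (inverse \<alpha>2) qx"
  "K2i qy = qadd (qsmul (inverse \<beta>2) qy) (qsmul (- t2 / (\<beta>2 * \<alpha>2 * \<gamma>2)) (qmul q qx qz))"
  "K2i qz = qsmul (inverse \<gamma>2) qz"
  "K2i (qmul q qx qz) = qsmul (inverse (\<alpha>2 * \<gamma>2)) (qmul q qx qz)"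
  using nonzero
  by (auto intro!: K2i_eqI simp: qlin_qsmul[OF linear(5)] qlin_qadd[OF linear(5)]
      K2_gens K_xz qsmul_qsmul qsmul_1, auto intro!: ext simp: qsmul_def qadd_def field_simps)

lemma K2_K1i_gens:
  "K2 (K1i qx) = qsmul (\<alpha>2 / \<alpha>1) qx"
  "K2 (K1i qy) = qadd (qsmul (\<beta>2 / \<beta>1) qy)
     (qsmul ((t2 * \<alpha>1 * \<gamma>1 - t1 * \<alpha>2 * \<gamma>2) / (\<beta>1 * \<alpha>1 * \<gamma>1)) (qmul q qx qz))"
  "K2 (K1i qz) = qsmul (\<gamma>2 / \<gamma>1) qz"
  using nonzero
  by (auto simp: K1i_gens qlin_qsmul[OF linear(5)] qlin_qadd[OF linear(5)] K2_gens K_xz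
      qsmul_qsmul, auto intro!: ext simp: qsmul_def qadd_def field_simps)

lemma K2i_K1_gens:
  "K2i (K1 qx) = qsmul (\<alpha>1 / \<alpha>2) qx"
  "K2i (K1 qy) = qadd (qsmul (\<beta>1 / \<beta>2) qy)
     (qsmul ((t1 * \<beta>2 - \<beta>1 * t2) / (\<beta>2 * \<alpha>2 * \<gamma>2)) (qmul q qx qz))"
  "K2i (K1 qz) = qsmul (\<gamma>1 / \<gamma>2) qz"
  using nonzero
  by (auto simp: K1_gens K2i_gens qlin_qsmul[OF linear(6)] qlin_qadd[OF linear(6)]
      qsmul_qsmul, auto intro!: ext simp: qsmul_def qadd_def field_simps)

lemma K_E_F_commute:
  assumes "p \<in> QP"
  shows "K1 (E p) = qsmul (inverse q) (E (K1 p))" "K2 (E p) = qsmul (- inverse q) (E (K2 p))"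
    "K1 (F p) = qsmul q (F (K1 p))" "K2 (F p) = qsmul (- q) (F (K2 p))"
  using module_algebra assms by (simp_all add: Xq_modalg_def)

lemma E_weight:
  assumes "p \<in> QP" "K1 p = qsmul c1 p" "K2 p = qsmul c2 p"
  shows "K1 (E p) = qsmul (inverse q * c1) (E p)" "K2 (E p) = qsmul (- inverse q * c2) (E p)"
  using assms by (simp_all add: K_E_F_commute qlin_qsmul[OF linear(1)] qsmul_qsmul)

lemma F_weight:
  assumes "p \<in> QP" "K1 p = qsmul c1 p" "K2 p = qsmul c2 p"
  shows "K1 (F p) = qsmul (q * c1) (F p)" "K2 (F p) = qsmul (- q * c2) (F p)"
  using assms by (simp_all add: K_E_F_commute qlin_qsmul[OF linear(2)] qsmul_qsmul)

lemma E_commutation: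
  assumes "a \<in> QP" "b \<in> QP" "qmul q b a = qsmul q (qmul q a b)"
  shows "qadd (qmul q (E b) a) (qmul q (K2 (K1i b)) (E a)) =
    qsmul q (qadd (qmul q (E a) b) (qmul q (K2 (K1i a)) (E b)))"
  using assms E_qmul qlin_qsmul[OF linear(1)] by (metis qmul_QP)

lemma F_commutation:
  assumes "a \<in> QP" "b \<in> QP" "qmul q b a = qsmul q (qmul q a b)"
  shows "qadd (qmul q b (F a)) (qmul q (F b) (K2i (K1 a))) =
    qsmul q (qadd (qmul q a (F b)) (qmul q (F a) (K2i (K1 b))))"
  using assms F_qmul qlin_qsmul[OF linear(2)] by (metis qmul_QP)

text \<open>Each equation below compares one coefficient of degree \<open>\<le> 2\<close> on both sides of the
  image of a commutation relation of the generators under \<open>E\<close> or \<open>F\<close>.\<close>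

lemmas coeff_eval = qadd_def qsmul_def qx_def qy_def qz_def qmul_qmono_left
  qmul_qmono_right qmono_apply

lemma E_yx_coeffs:
  defines "s \<equiv> (t2 * \<alpha>1 * \<gamma>1 - t1 * \<alpha>2 * \<gamma>2) / (\<beta>1 * \<alpha>1 * \<gamma>1)"
  shows "(\<beta>2 / \<beta>1 - q) * E qx 0 0 0 = 0"
    "(1 - q * (\<alpha>2 / \<alpha>1)) * E qy 1 0 0 = 0"
    "(1 - \<alpha>2 / \<alpha>1) * E qy 0 1 0 = (1 - \<beta>2 / \<beta>1) * E qx 1 0 0"
    "q * (1 - \<alpha>2 / \<alpha>1) * E qy 0 0 1 = - s * E qx 0 0 0"
proof -
  note c = E_commutation[of qx qy, OF _ _ qmul_qy_qx, unfolded K2_K1i_gens qmul_bilinear,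
      unfolded qmul_qx_qz, THEN fun_cong, THEN fun_cong, THEN fun_cong, simplified]
  show "(\<beta>2 / \<beta>1 - q) * E qx 0 0 0 = 0"
    using c[of 0 1 0] by (simp add: coeff_eval algebra_simps)
  show "(1 - q * (\<alpha>2 / \<alpha>1)) * E qy 1 0 0 = 0"
    using c[of 2 0 0] by (simp add: coeff_eval algebra_simps)
  have "q * ((1 - \<alpha>2 / \<alpha>1) * E qy 0 1 0 - (1 - \<beta>2 / \<beta>1) * E qx 1 0 0) = 0"
    using c[of 1 1 0] by (simp add: coeff_eval algebra_simps)
  then show "(1 - \<alpha>2 / \<alpha>1) * E qy 0 1 0 = (1 - \<beta>2 / \<beta>1) * E qx 1 0 0"
    using q_nonzero by simp
  show "q * (1 - \<alpha>2 / \<alpha>1) * E qy 0 0 1 = - s * E qx 0 0 0"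
    using c[of 1 0 1] by (simp add: coeff_eval algebra_simps s_def)
qed

lemma E_zx_coeffs:
  "(\<gamma>2 / \<gamma>1 - q) * E qx 0 0 0 = 0"
  "(1 - q * (\<alpha>2 / \<alpha>1)) * E qz 0 0 0 = 0"
proof -
  note c = E_commutation[of qx qz, OF _ _ qmul_qz_qx, unfolded K2_K1i_gens qmul_bilinear,
      unfolded qmul_qx_qz, THEN fun_cong, THEN fun_cong, THEN fun_cong, simplified]
  show "(\<gamma>2 / \<gamma>1 - q) * E qx 0 0 0 = 0"
    using c[of 0 0 1] by (simp add: coeff_eval algebra_simps)
  show "(1 - q * (\<alpha>2 / \<alpha>1)) * E qz 0 0 0 = 0"
    using c[of 1 0 0] by (simp add: coeff_eval algebra_simps)
qed

lemma E_zy_coeffs: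
  defines "s \<equiv> (t2 * \<alpha>1 * \<gamma>1 - t1 * \<alpha>2 * \<gamma>2) / (\<beta>1 * \<alpha>1 * \<gamma>1)"
  shows "(1 - q * (\<beta>2 / \<beta>1)) * E qz 0 0 0 = 0"
    "(\<gamma>2 / \<gamma>1 - q) * E qy 0 0 1 = 0"
    "(1 - \<gamma>2 / \<gamma>1) * E qy 0 1 0 = (1 - \<beta>2 / \<beta>1) * E qz 0 0 1"
    "(\<gamma>2 / \<gamma>1 - 1) * E qy 1 0 0 = s * E qz 0 0 0"
proof -
  note c = E_commutation[of qy qz, OF _ _ qmul_qz_qy, unfolded K2_K1i_gens qmul_bilinear,
      unfolded qmul_qx_qz, THEN fun_cong, THEN fun_cong, THEN fun_cong, simplified]
  show "(1 - q * (\<beta>2 / \<beta>1)) * E qz 0 0 0 = 0"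
    using c[of 0 1 0] by (simp add: coeff_eval algebra_simps)
  show "(\<gamma>2 / \<gamma>1 - q) * E qy 0 0 1 = 0"
    using c[of 0 0 2] by (simp add: coeff_eval algebra_simps)
  have "q * ((1 - \<gamma>2 / \<gamma>1) * E qy 0 1 0 - (1 - \<beta>2 / \<beta>1) * E qz 0 0 1) = 0"
    using c[of 0 1 1] by (simp add: coeff_eval algebra_simps)
  then show "(1 - \<gamma>2 / \<gamma>1) * E qy 0 1 0 = (1 - \<beta>2 / \<beta>1) * E qz 0 0 1"
    using q_nonzero by simp
  have "q * ((\<gamma>2 / \<gamma>1 - 1) * E qy 1 0 0 - s * E qz 0 0 0) = 0"
    using c[of 1 0 1] by (simp add: coeff_eval algebra_simps s_def)
  then show "(\<gamma>2 / \<gamma>1 - 1) * E qy 1 0 0 = s * E qz 0 0 0"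
    using q_nonzero by simp
qed

lemma F_yx_coeffs:
  defines "s \<equiv> (t1 * \<beta>2 - \<beta>1 * t2) / (\<beta>2 * \<alpha>2 * \<gamma>2)"
  shows "(1 - q * (\<beta>1 / \<beta>2)) * F qx 0 0 0 = 0"
    "(\<alpha>1 / \<alpha>2 - q) * F qy 1 0 0 = 0"
    "(1 - \<alpha>1 / \<alpha>2) * F qy 0 1 0 = (1 - \<beta>1 / \<beta>2) * F qx 1 0 0"
    "(\<alpha>1 / \<alpha>2 - 1) * F qy 0 0 1 = s * F qx 0 0 0"
proof -
  note c = F_commutation[of qx qy, OF _ _ qmul_qy_qx, unfolded K2i_K1_gens qmul_bilinear,
      unfolded qmul_qx_qz, THEN fun_cong, THEN fun_cong, THEN fun_cong, simplified]
  show "(1 - q * (\<beta>1 / \<beta>2)) * F qx 0 0 0 = 0"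
    using c[of 0 1 0] by (simp add: coeff_eval algebra_simps)
  show "(\<alpha>1 / \<alpha>2 - q) * F qy 1 0 0 = 0"
    using c[of 2 0 0] by (simp add: coeff_eval algebra_simps)
  have "q * ((1 - \<alpha>1 / \<alpha>2) * F qy 0 1 0 - (1 - \<beta>1 / \<beta>2) * F qx 1 0 0) = 0"
    using c[of 1 1 0] by (simp add: coeff_eval algebra_simps)
  then show "(1 - \<alpha>1 / \<alpha>2) * F qy 0 1 0 = (1 - \<beta>1 / \<beta>2) * F qx 1 0 0"
    using q_nonzero by simp
  have "q * ((\<alpha>1 / \<alpha>2 - 1) * F qy 0 0 1 - s * F qx 0 0 0) = 0"
    using c[of 1 0 1] by (simp add: coeff_eval algebra_simps s_def)
  then show "(\<alpha>1 / \<alpha>2 - 1) * F qy 0 0 1 = s * F qx 0 0 0"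
    using q_nonzero by simp
qed

lemma F_zx_coeffs:
  "(1 - q * (\<gamma>1 / \<gamma>2)) * F qx 0 0 0 = 0"
  "(\<alpha>1 / \<alpha>2 - q) * F qz 0 0 0 = 0"
proof -
  note c = F_commutation[of qx qz, OF _ _ qmul_qz_qx, unfolded K2i_K1_gens qmul_bilinear,
      unfolded qmul_qx_qz, THEN fun_cong, THEN fun_cong, THEN fun_cong, simplified]
  show "(1 - q * (\<gamma>1 / \<gamma>2)) * F qx 0 0 0 = 0"
    using c[of 0 0 1] by (simp add: coeff_eval algebra_simps)
  show "(\<alpha>1 / \<alpha>2 - q) * F qz 0 0 0 = 0"
    using c[of 1 0 0] by (simp add: coeff_eval algebra_simps)
qed

lemma F_zy_coeffs:
  defines "s \<equiv> (t1 * \<beta>2 - \<beta>1 * t2) / (\<beta>2 * \<alpha>2 * \<gamma>2)"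
  shows "(\<beta>1 / \<beta>2 - q) * F qz 0 0 0 = 0"
    "(1 - q * (\<gamma>1 / \<gamma>2)) * F qy 0 0 1 = 0"
    "(1 - \<gamma>1 / \<gamma>2) * F qy 0 1 0 = (1 - \<beta>1 / \<beta>2) * F qz 0 0 1"
    "q * (1 - \<gamma>1 / \<gamma>2) * F qy 1 0 0 = - s * F qz 0 0 0"
proof -
  note c = F_commutation[of qy qz, OF _ _ qmul_qz_qy, unfolded K2i_K1_gens qmul_bilinear,
      unfolded qmul_qx_qz, THEN fun_cong, THEN fun_cong, THEN fun_cong, simplified]
  show "(\<beta>1 / \<beta>2 - q) * F qz 0 0 0 = 0"
    using c[of 0 1 0] by (simp add: coeff_eval algebra_simps)
  show "(1 - q * (\<gamma>1 / \<gamma>2)) * F qy 0 0 1 = 0"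
    using c[of 0 0 2] by (simp add: coeff_eval algebra_simps)
  have "q * ((1 - \<gamma>1 / \<gamma>2) * F qy 0 1 0 - (1 - \<beta>1 / \<beta>2) * F qz 0 0 1) = 0"
    using c[of 0 1 1] by (simp add: coeff_eval algebra_simps)
  then show "(1 - \<gamma>1 / \<gamma>2) * F qy 0 1 0 = (1 - \<beta>1 / \<beta>2) * F qz 0 0 1"
    using q_nonzero by simp
  show "q * (1 - \<gamma>1 / \<gamma>2) * F qy 1 0 0 = - s * F qz 0 0 0"
    using c[of 1 0 1] by (simp add: coeff_eval algebra_simps s_def)
qed

lemma E_qx_weight: "K1 (E qx) = qsmul (inverse q * \<alpha>1) (E qx)"
    "K2 (E qx) = qsmul (- inverse q * \<alpha>2) (E qx)"
  and E_qz_weight: "K1 (E qz) = qsmul (inverse q * \<gamma>1) (E qz)"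
    "K2 (E qz) = qsmul (- inverse q * \<gamma>2) (E qz)"
  and F_qx_weight: "K1 (F qx) = qsmul (q * \<alpha>1) (F qx)" "K2 (F qx) = qsmul (- q * \<alpha>2) (F qx)"
  and F_qz_weight: "K1 (F qz) = qsmul (q * \<gamma>1) (F qz)" "K2 (F qz) = qsmul (- q * \<gamma>2) (F qz)"
  using E_weight F_weight K1_gens K2_gens by simp_all

lemma E_qx_constant_term:
  assumes a0: "E qx 0 0 0 \<noteq> 0"
  shows "\<alpha>1 = q \<and> \<alpha>2 = - q \<and> inverse \<beta>1 * \<beta>2 = q \<and> inverse \<gamma>1 * \<gamma>2 = q \<and>
    hcomp 1 (E qx) = qzero \<and>
    hcomp 1 (E qy) = qsmul (- (E qx 0 0 0 * (t2 + q * t1)) / (2 * q * \<beta>1)) qz"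
proof -
  note w = weight_vector_with_constant_term[OF qlin_QP[OF linear(1) generators_QP(2)] E_qx_weight a0]
  have \<alpha>: "\<alpha>1 = q" "\<alpha>2 = - q"
    using w(1,2) q_nonzero by (auto simp: field_simps equation_minus_iff)
  have \<beta>: "\<beta>2 = q * \<beta>1" and \<gamma>: "\<gamma>2 = q * \<gamma>1"
    using E_yx_coeffs(1) E_zx_coeffs(1) a0 nonzero by (simp_all add: field_simps)
  have "(\<alpha>1, \<alpha>2) \<noteq> (1, 1)" "(\<beta>1, \<beta>2) \<noteq> (1, 1)" "(\<gamma>1, \<gamma>2) \<noteq> (1, 1)"
    using \<alpha> \<beta> \<gamma> q_ne_1 q_nonzero by (auto simp: field_simps)
  then have Ex: "E qx 1 0 0 = 0" "E qx 0 1 0 = 0" "E qx 0 0 1 = 0"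
    using w(3-5) by blast+
  have ratio: "\<alpha>2 / \<alpha>1 = -1"
    using \<alpha> q_nonzero by simp
  then have "(1 + q) * E qy 1 0 0 = 0" "2 * E qy 0 1 0 = 0"
    using E_yx_coeffs(2,3) Ex(1) by simp_all
  then have Ey: "E qy 1 0 0 = 0" "E qy 0 1 0 = 0"
    using q_ne_minus_1 by (simp_all add: add_eq_0_iff)
  have "(t2 * \<alpha>1 * \<gamma>1 - t1 * \<alpha>2 * \<gamma>2) / (\<beta>1 * \<alpha>1 * \<gamma>1) = (t2 + q * t1) / \<beta>1"
    using \<alpha> \<gamma> q_nonzero nonzero by (simp add: field_simps)
  then have "2 * q * E qy 0 0 1 = - ((t2 + q * t1) / \<beta>1) * E qx 0 0 0"
    using E_yx_coeffs(4) ratio by (simp add: mult.commute)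
  then have "E qy 0 0 1 = - (E qx 0 0 0 * (t2 + q * t1)) / (2 * q * \<beta>1)"
    using q_nonzero nonzero by (simp add: field_simps)
  then have "hcomp 1 (E qy) = qsmul (- (E qx 0 0 0 * (t2 + q * t1)) / (2 * q * \<beta>1)) qz"
    using hcomp_1_eq_qz[of "E qy", OF Ey] by simp
  moreover have "hcomp 1 (E qx) = qzero"
    using Ex by (rule hcomp_1_eq_qzero)
  ultimately show ?thesis
    using \<alpha> \<beta> \<gamma> nonzero by simp
qed

lemma E_qz_constant_term:
  assumes c0: "E qz 0 0 0 \<noteq> 0"
  shows "\<gamma>1 = q \<and> \<gamma>2 = - q \<and> inverse \<beta>1 * \<beta>2 = inverse q \<and> inverse \<alpha>1 * \<alpha>2 = inverse q \<and>
    hcomp 1 (E qz) = qzero \<and>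
    hcomp 1 (E qy) = qsmul (- (E qz 0 0 0 * (t1 + q * t2)) / (2 * q * \<beta>1)) qx"
proof -
  note w = weight_vector_with_constant_term[OF qlin_QP[OF linear(1) generators_QP(4)] E_qz_weight c0]
  have \<gamma>: "\<gamma>1 = q" "\<gamma>2 = - q"
    using w(1,2) q_nonzero by (auto simp: field_simps equation_minus_iff)
  have \<beta>: "\<beta>1 = q * \<beta>2" and \<alpha>: "\<alpha>1 = q * \<alpha>2"
    using E_zy_coeffs(1) E_zx_coeffs(2) c0 nonzero by (simp_all add: field_simps)
  have "(\<alpha>1, \<alpha>2) \<noteq> (1, 1)" "(\<beta>1, \<beta>2) \<noteq> (1, 1)" "(\<gamma>1, \<gamma>2) \<noteq> (1, 1)"
    using \<alpha> \<beta> \<gamma> q_ne_1 q_nonzero by (auto simp: field_simps)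
  then have Ez: "E qz 1 0 0 = 0" "E qz 0 1 0 = 0" "E qz 0 0 1 = 0"
    using w(3-5) by blast+
  have ratio: "\<gamma>2 / \<gamma>1 = -1"
    using \<gamma> q_nonzero by simp
  then have "(1 + q) * E qy 0 0 1 = 0" "2 * E qy 0 1 0 = 0"
    using E_zy_coeffs(2,3) Ez(3) by (simp_all add: algebra_simps neg_eq_iff_add_eq_0)
  then have Ey: "E qy 0 1 0 = 0" "E qy 0 0 1 = 0"
    using q_ne_minus_1 by (simp_all add: add_eq_0_iff)
  have "(t2 * \<alpha>1 * \<gamma>1 - t1 * \<alpha>2 * \<gamma>2) / (\<beta>1 * \<alpha>1 * \<gamma>1) = (t1 + q * t2) / (q * \<beta>1)"
    using \<alpha> \<gamma> q_nonzero nonzero by (simp add: field_simps)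
  then have "2 * E qy 1 0 0 = - ((t1 + q * t2) / (q * \<beta>1) * E qz 0 0 0)"
    using E_zy_coeffs(4) ratio by simp (metis minus_minus)
  then have "E qy 1 0 0 = - (E qz 0 0 0 * (t1 + q * t2)) / (2 * q * \<beta>1)"
    using q_nonzero nonzero by (simp add: field_simps)
  then have "hcomp 1 (E qy) = qsmul (- (E qz 0 0 0 * (t1 + q * t2)) / (2 * q * \<beta>1)) qx"
    using hcomp_1_eq_qx[of "E qy", OF Ey] by simp
  moreover have "hcomp 1 (E qz) = qzero"
    using Ez by (rule hcomp_1_eq_qzero)
  moreover have "inverse \<beta>1 * \<beta>2 = inverse q" "inverse \<alpha>1 * \<alpha>2 = inverse q"
    using \<alpha> \<beta> q_nonzero nonzero by (simp_all add: field_simps)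
  ultimately show ?thesis
    using \<gamma> by simp
qed

lemma F_qx_constant_term:
  assumes a0: "F qx 0 0 0 \<noteq> 0"
  shows "\<alpha>1 = inverse q \<and> \<alpha>2 = - inverse q \<and> \<beta>1 * inverse \<beta>2 = inverse q \<and>
    \<gamma>1 * inverse \<gamma>2 = inverse q \<and>
    hcomp 1 (F qx) = qzero \<and>
    hcomp 1 (F qy) = qsmul (F qx 0 0 0 * (t2 - q * t1) / (2 * q * \<alpha>2 * \<gamma>2)) qz"
proof -
  note w = weight_vector_with_constant_term[OF qlin_QP[OF linear(2) generators_QP(2)] F_qx_weight a0]
  have \<alpha>: "\<alpha>1 = inverse q" "\<alpha>2 = - inverse q"
    using w(1,2) q_nonzero by (auto simp: field_simps equation_minus_iff)
  have \<beta>: "\<beta>2 = q * \<beta>1" and \<gamma>: "\<gamma>2 = q * \<gamma>1"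
    using F_yx_coeffs(1) F_zx_coeffs(1) a0 nonzero by (simp_all add: field_simps)
  have "(\<alpha>1, \<alpha>2) \<noteq> (1, 1)" "(\<beta>1, \<beta>2) \<noteq> (1, 1)" "(\<gamma>1, \<gamma>2) \<noteq> (1, 1)"
    using \<alpha> \<beta> \<gamma> q_ne_1 q_nonzero by (auto simp: field_simps)
  then have Fx: "F qx 1 0 0 = 0" "F qx 0 1 0 = 0" "F qx 0 0 1 = 0"
    using w(3-5) by blast+
  have ratio: "\<alpha>1 / \<alpha>2 = -1"
    using \<alpha> q_nonzero by simp
  then have "(1 + q) * F qy 1 0 0 = 0" "2 * F qy 0 1 0 = 0"
    using F_yx_coeffs(2,3) Fx(1) by (simp_all add: algebra_simps neg_eq_iff_add_eq_0)
  then have Fy: "F qy 1 0 0 = 0" "F qy 0 1 0 = 0"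
    using q_ne_minus_1 by (simp_all add: add_eq_0_iff)
  have "(t1 * \<beta>2 - \<beta>1 * t2) / (\<beta>2 * \<alpha>2 * \<gamma>2) = (q * t1 - t2) / (q * \<alpha>2 * \<gamma>2)"
    using \<beta> q_nonzero nonzero by (simp add: field_simps)
  then have "- 2 * F qy 0 0 1 = (q * t1 - t2) / (q * \<alpha>2 * \<gamma>2) * F qx 0 0 0"
    using F_yx_coeffs(4) ratio by simp
  then have "F qy 0 0 1 = F qx 0 0 0 * (t2 - q * t1) / (2 * q * \<alpha>2 * \<gamma>2)"
    using q_nonzero nonzero by (simp add: field_simps)
  then have "hcomp 1 (F qy) = qsmul (F qx 0 0 0 * (t2 - q * t1) / (2 * q * \<alpha>2 * \<gamma>2)) qz"
    using hcomp_1_eq_qz[of "F qy", OF Fy] by simp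
  moreover have "hcomp 1 (F qx) = qzero"
    using Fx by (rule hcomp_1_eq_qzero)
  moreover have "\<beta>1 * inverse \<beta>2 = inverse q" "\<gamma>1 * inverse \<gamma>2 = inverse q"
    using \<beta> \<gamma> q_nonzero nonzero by (simp_all add: field_simps)
  ultimately show ?thesis
    using \<alpha> by simp
qed

lemma F_qz_constant_term:
  assumes c0: "F qz 0 0 0 \<noteq> 0"
  shows "\<gamma>1 = inverse q \<and> \<gamma>2 = - inverse q \<and> \<beta>1 * inverse \<beta>2 = q \<and> \<alpha>1 * inverse \<alpha>2 = q \<and>
    hcomp 1 (F qz) = qzero \<and>
    hcomp 1 (F qy) = qsmul (F qz 0 0 0 * (q * t2 - t1) / (2 * q * \<alpha>2 * \<gamma>2)) qx"
proof -
  note w = weight_vector_with_constant_term[OF qlin_QP[OF linear(2) generators_QP(4)] F_qz_weight c0]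
  have \<gamma>: "\<gamma>1 = inverse q" "\<gamma>2 = - inverse q"
    using w(1,2) q_nonzero by (auto simp: field_simps equation_minus_iff)
  have \<beta>: "\<beta>1 = q * \<beta>2" and \<alpha>: "\<alpha>1 = q * \<alpha>2"
    using F_zy_coeffs(1) F_zx_coeffs(2) c0 nonzero by (simp_all add: field_simps)
  have "(\<alpha>1, \<alpha>2) \<noteq> (1, 1)" "(\<beta>1, \<beta>2) \<noteq> (1, 1)" "(\<gamma>1, \<gamma>2) \<noteq> (1, 1)"
    using \<alpha> \<beta> \<gamma> q_ne_1 q_nonzero by (auto simp: field_simps)
  then have Fz: "F qz 1 0 0 = 0" "F qz 0 1 0 = 0" "F qz 0 0 1 = 0"
    using w(3-5) by blast+
  have ratio: "\<gamma>1 / \<gamma>2 = -1"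
    using \<gamma> q_nonzero by simp
  then have "(1 + q) * F qy 0 0 1 = 0" "2 * F qy 0 1 0 = 0"
    using F_zy_coeffs(2,3) Fz(3) by (simp_all add: algebra_simps)
  then have Fy: "F qy 0 1 0 = 0" "F qy 0 0 1 = 0"
    using q_ne_minus_1 by (simp_all add: add_eq_0_iff)
  have "(t1 * \<beta>2 - \<beta>1 * t2) / (\<beta>2 * \<alpha>2 * \<gamma>2) = (t1 - q * t2) / (\<alpha>2 * \<gamma>2)"
    using \<beta> q_nonzero nonzero by (simp add: field_simps)
  then have "2 * q * F qy 1 0 0 = - ((t1 - q * t2) / (\<alpha>2 * \<gamma>2)) * F qz 0 0 0"
    using F_zy_coeffs(4) ratio by (simp add: mult.commute)
  then have "F qy 1 0 0 = F qz 0 0 0 * (q * t2 - t1) / (2 * q * \<alpha>2 * \<gamma>2)"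
    using q_nonzero nonzero by (simp add: field_simps)
  then have "hcomp 1 (F qy) = qsmul (F qz 0 0 0 * (q * t2 - t1) / (2 * q * \<alpha>2 * \<gamma>2)) qx"
    using hcomp_1_eq_qx[of "F qy", OF Fy] by simp
  moreover have "hcomp 1 (F qz) = qzero"
    using Fz by (rule hcomp_1_eq_qzero)
  moreover have "\<beta>1 * inverse \<beta>2 = q" "\<alpha>1 * inverse \<alpha>2 = q"
    using \<alpha> \<beta> nonzero by (simp_all add: field_simps)
  ultimately show ?thesis
    using \<gamma> by simp
qed

end

theorem lemma3p3:
  fixes q \<alpha>1 \<alpha>2 \<beta>1 \<beta>2 \<gamma>1 \<gamma>2 t1 t2 :: complex
    and E F K1 K1i K2 K2i :: "qpol \<Rightarrow> qpol"
  assumes hq: "not_root_of_unity q"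
    and hpi: "Xq_modalg q E F K1 K1i K2 K2i"
    and hnz: "\<alpha>1 \<noteq> 0" "\<alpha>2 \<noteq> 0" "\<beta>1 \<noteq> 0" "\<beta>2 \<noteq> 0" "\<gamma>1 \<noteq> 0" "\<gamma>2 \<noteq> 0"
             "t1 \<noteq> 0" "t2 \<noteq> 0"
    and hK1: "K1 qx = qsmul \<alpha>1 qx" "K1 qy = qadd (qsmul \<beta>1 qy) (qsmul t1 (qmul q qx qz))"
             "K1 qz = qsmul \<gamma>1 qz"
    and hK2: "K2 qx = qsmul \<alpha>2 qx" "K2 qy = qadd (qsmul \<beta>2 qy) (qsmul t2 (qmul q qx qz))"
             "K2 qz = qsmul \<gamma>2 qz"
  defines "a0 \<equiv> E qx 0 0 0" and "c0 \<equiv> E qz 0 0 0"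
    and "a0' \<equiv> F qx 0 0 0" and "c0' \<equiv> F qz 0 0 0"
  shows
    "(a0 \<noteq> 0 \<longrightarrow>
        \<alpha>1 = q \<and> \<alpha>2 = - q \<and> inverse \<beta>1 * \<beta>2 = q \<and> inverse \<gamma>1 * \<gamma>2 = q \<and>
        hcomp 1 (E qx) = qzero \<and>
        hcomp 1 (E qy) = qsmul (- (a0 * (t2 + q * t1)) / (2 * q * \<beta>1)) qz) \<and>
     (c0 \<noteq> 0 \<longrightarrow>
        \<gamma>1 = q \<and> \<gamma>2 = - q \<and> inverse \<beta>1 * \<beta>2 = inverse q \<and> inverse \<alpha>1 * \<alpha>2 = inverse q \<and>
        hcomp 1 (E qz) = qzero \<and>
        hcomp 1 (E qy) = qsmul (- (c0 * (t1 + q * t2)) / (2 * q * \<beta>1)) qx) \<and>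
     (a0' \<noteq> 0 \<longrightarrow>
        \<alpha>1 = inverse q \<and> \<alpha>2 = - inverse q \<and> \<beta>1 * inverse \<beta>2 = inverse q \<and>
        \<gamma>1 * inverse \<gamma>2 = inverse q \<and>
        hcomp 1 (F qx) = qzero \<and>
        hcomp 1 (F qy) = qsmul (a0' * (t2 - q * t1) / (2 * q * \<alpha>2 * \<gamma>2)) qz) \<and>
     (c0' \<noteq> 0 \<longrightarrow>
        \<gamma>1 = inverse q \<and> \<gamma>2 = - inverse q \<and> \<beta>1 * inverse \<beta>2 = q \<and> \<alpha>1 * inverse \<alpha>2 = q \<and>
        hcomp 1 (F qz) = qzero \<and>
        hcomp 1 (F qy) = qsmul (c0' * (q * t2 - t1) / (2 * q * \<alpha>2 * \<gamma>2)) qx)"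
proof -
  interpret nondiagonal_module_algebra q \<alpha>1 \<alpha>2 \<beta>1 \<beta>2 \<gamma>1 \<gamma>2 t1 t2 E F K1 K1i K2 K2i
    by unfold_locales (fact hq hpi hnz hK1 hK2)+
  show ?thesis
    unfolding a0_def c0_def a0'_def c0'_def
    using E_qx_constant_term E_qz_constant_term F_qx_constant_term F_qz_constant_term by blast
qed

end
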